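(* If $\Gamma$ is a connected mutation-finite graph with at least $4$ vertices, then every connected subgraph of $\Gamma$ with $3$ vertices is of type $\mathbf{A}_3$ or $\widehat{\mathbf{A}}_2$, i.e. is isomorphic to one of the following six graphs on vertices $1,2,3$ (all arrows single unless stated): $1\to2\to3$; $2\to1$ and $2\to3$; $1\to2$ and $3\to2$; $1\to2\to3\to1$; $1\to2\to3$ and $1\to3$; $1\to2\to3$ together with two arrows $3\to1$.
   Context: A graph here is a finite directed multigraph with no loops and no oriented $2$-cycles; multiple arrows in the same direction are allowed. The mutation $\mu_k\Gamma$ at a vertex $k$: for every pair of arrows $i\to k$, $k\to j$ add an arrow $i\to j$; reverse all arrows incident to $k$; then delete pairs of opposite arrows $i\to j$, $j\to i$ until no oriented $2$-cycles remain. $\Gamma$ is mutation-finite if only finitely many isomorphism classes of graphs are obtainable from it by sequences of mutations. Connected means the underlying undirected graph is connected. Subgraph always means full (induced) subgraph: a subset of the vertices with all arrows between them. *)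

theory Defs
  imports Main
begin

text \<open>A graph on a finite vertex set V is a function E :: 'a => 'a => nat,
  E i j = number of arrows i -> j. No loops, no oriented 2-cycles,
  arrows only between vertices of V.\<close>

definition quiver :: "'a set \<Rightarrow> ('a \<Rightarrow> 'a \<Rightarrow> nat) \<Rightarrow> bool" where
  "quiver V E \<longleftrightarrow> finite V \<and> (\<forall>x. E x x = 0)
     \<and> (\<forall>x y. E x y > 0 \<longrightarrow> E y x = 0)
     \<and> (\<forall>x y. E x y > 0 \<longrightarrow> x \<in> V \<and> y \<in> V)"

text \<open>Mutation at k: add E i k * E k j arrows i -> j for i,j distinct from k,
  reverse arrows at k, then cancel 2-cycles (truncated subtraction).\<close>

definition mutate :: "'a \<Rightarrow> ('a \<Rightarrow> 'a \<Rightarrow> nat) \<Rightarrow> ('a \<Rightarrow> 'a \<Rightarrow> nat)" where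
  "mutate k E = (\<lambda>i j. if i = k \<or> j = k then E j i
      else (E i j + E i k * E k j) - (E j i + E j k * E k i))"

inductive mut_reach :: "'a set \<Rightarrow> ('a \<Rightarrow> 'a \<Rightarrow> nat) \<Rightarrow> ('a \<Rightarrow> 'a \<Rightarrow> nat) \<Rightarrow> bool"
  for V E where
  refl: "mut_reach V E E"
| step: "mut_reach V E F \<Longrightarrow> k \<in> V \<Longrightarrow> mut_reach V E (mutate k F)"

definition graph_iso :: "'a set \<Rightarrow> ('a \<Rightarrow> 'a \<Rightarrow> nat) \<Rightarrow> 'b set \<Rightarrow> ('b \<Rightarrow> 'b \<Rightarrow> nat) \<Rightarrow> bool" where
  "graph_iso V E W G \<longleftrightarrow> (\<exists>f. bij_betw f V W \<and> (\<forall>x\<in>V. \<forall>y\<in>V. G (f x) (f y) = E x y))"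

definition mutation_finite :: "'a set \<Rightarrow> ('a \<Rightarrow> 'a \<Rightarrow> nat) \<Rightarrow> bool" where
  "mutation_finite V E \<longleftrightarrow> (\<exists>S. finite S \<and>
     (\<forall>F. mut_reach V E F \<longrightarrow> (\<exists>G\<in>S. graph_iso V F V G)))"

definition connected_on :: "'a set \<Rightarrow> ('a \<Rightarrow> 'a \<Rightarrow> nat) \<Rightarrow> bool" where
  "connected_on W E \<longleftrightarrow> W \<noteq> {} \<and>
     (\<forall>x\<in>W. \<forall>y\<in>W. (x, y) \<in> {(u, v). u \<in> W \<and> v \<in> W \<and> (E u v > 0 \<or> E v u > 0)}\<^sup>*)"

definition A3_a :: "nat \<Rightarrow> nat \<Rightarrow> nat" where
  "A3_a i j = (if (i, j) = (1, 2) \<or> (i, j) = (2, 3) then 1 else 0)"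
definition A3_b :: "nat \<Rightarrow> nat \<Rightarrow> nat" where
  "A3_b i j = (if (i, j) = (2, 1) \<or> (i, j) = (2, 3) then 1 else 0)"
definition A3_c :: "nat \<Rightarrow> nat \<Rightarrow> nat" where
  "A3_c i j = (if (i, j) = (1, 2) \<or> (i, j) = (3, 2) then 1 else 0)"
definition A3_d :: "nat \<Rightarrow> nat \<Rightarrow> nat" where
  "A3_d i j = (if (i, j) = (1, 2) \<or> (i, j) = (2, 3) \<or> (i, j) = (3, 1) then 1 else 0)"
definition A2hat_e :: "nat \<Rightarrow> nat \<Rightarrow> nat" where
  "A2hat_e i j = (if (i, j) = (1, 2) \<or> (i, j) = (2, 3) \<or> (i, j) = (1, 3) then 1 else 0)"
definition A2hat_f :: "nat \<Rightarrow> nat \<Rightarrow> nat" where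
  "A2hat_f i j = (if (i, j) = (1, 2) \<or> (i, j) = (2, 3) then 1
                  else if (i, j) = (3, 1) then 2 else 0)"

definition type_A3_or_A2hat :: "'a set \<Rightarrow> ('a \<Rightarrow> 'a \<Rightarrow> nat) \<Rightarrow> bool" where
  "type_A3_or_A2hat W E \<longleftrightarrow>
     (\<exists>G\<in>{A3_a, A3_b, A3_c, A3_d, A2hat_e, A2hat_f}. graph_iso W E {1, 2, 3} G)"

end

theory Submission
  imports Defs
begin

text \<open>
  Mutation-finiteness bounds every arrow multiplicity over the whole mutation class.
  An oriented 3-cycle with multiplicities \<open>a, b, c \<ge> 2\<close> and \<open>a + b + c > 6\<close>, mutated at the
  vertex opposite its lightest arrow \<open>c\<close>, becomes the cycle \<open>(ab - c, b, a)\<close> of strictly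
  larger total weight; iterating contradicts the bound, so \<open>a + b + c \<le> 6\<close>. One or two further
  mutations exclude the remaining patterns, leaving only the cycles \<open>(1,1,1)\<close>, \<open>(1,1,2)\<close> and
  \<open>(2,2,2)\<close> up to rotation. Mutating a path at its middle vertex (or a source or sink at an
  end) produces such a cycle, which forces all multiplicities of an acyclic triangle to be 1.
  Finally, a vertex outside a \<open>(2,2,2)\<close> triangle and adjacent to it would span, with each of
  two consecutive double arrows, a triangle that must be the cycle through that arrow, giving
  an oriented 2-cycle; connectedness and \<open>|V| \<ge> 4\<close> provide such a vertex.
\<close>

lemma mutation_finite_imp_bounded:
  assumes "finite V" and "mutation_finite V E"
  shows "\<exists>B. \<forall>F. mut_reach V E F \<longrightarrow> (\<forall>u\<in>V. \<forall>v\<in>V. F u v \<le> B)"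
proof -
  obtain S where "finite S" and S: "\<And>F. mut_reach V E F \<Longrightarrow> \<exists>G\<in>S. graph_iso V F V G"
    using assms(2) unfolding mutation_finite_def by blast
  define B where "B = (\<Sum>G\<in>S. \<Sum>(u, v)\<in>V \<times> V. G u v)"
  have "F u v \<le> B" if R: "mut_reach V E F" and uv: "u \<in> V" "v \<in> V" for F u v
  proof -
    obtain G f where "G \<in> S" "bij_betw f V V" and Gf: "\<forall>x\<in>V. \<forall>y\<in>V. G (f x) (f y) = F x y"
      using S[OF R] unfolding graph_iso_def by blast
    then have "(f u, f v) \<in> V \<times> V"
      using uv bij_betwE by blast
    then have "F u v \<le> (\<Sum>(u, v)\<in>V \<times> V. G u v)"
      using Gf uv assms(1) member_le_sum[of "(f u, f v)" "V \<times> V" "\<lambda>(u, v). G u v"]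
      by auto
    also have "\<dots> \<le> B"
      unfolding B_def using \<open>G \<in> S\<close> \<open>finite S\<close> by (intro member_le_sum) auto
    finally show ?thesis .
  qed
  then show ?thesis by blast
qed

definition cycle3 :: "('a \<Rightarrow> 'a \<Rightarrow> nat) \<Rightarrow> 'a \<Rightarrow> 'a \<Rightarrow> 'a \<Rightarrow> nat \<Rightarrow> nat \<Rightarrow> nat \<Rightarrow> bool" where
  "cycle3 F x y z a b c \<longleftrightarrow>
     F x y = a \<and> F y z = b \<and> F z x = c \<and> F y x = 0 \<and> F z y = 0 \<and> F x z = 0"

lemma cycle3_rotate: "cycle3 F x y z a b c \<Longrightarrow> cycle3 F y z x b c a"
  unfolding cycle3_def by auto

lemma cycle3_rotate_min:
  assumes "cycle3 F x y z a b c" and "distinct [x, y, z]"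
  obtains x' y' z' a' b' c' where "cycle3 F x' y' z' a' b' c'" "{x', y', z'} = {x, y, z}"
    "distinct [x', y', z']" "(a', b', c') \<in> {(a, b, c), (b, c, a), (c, a, b)}"
    "c' \<le> a'" "c' \<le> b'"
proof -
  have "cycle3 F y z x b c a" "cycle3 F z x y c a b"
    using assms(1) cycle3_rotate by metis+
  moreover have "{y, z, x} = {x, y, z}" "{z, x, y} = {x, y, z}"
    by auto
  ultimately show thesis
    using that[of x y z a b c] that[of y z x b c a] that[of z x y c a b] assms
    by (cases "c \<le> a \<and> c \<le> b"; cases "a \<le> b") auto
qed

lemma mutate_cycle3:
  assumes "cycle3 F x y z a b c" and "distinct [x, y, z]" and "c \<le> a * b"
  shows "cycle3 (mutate y F) x z y (a * b - c) b a"
  using assms unfolding cycle3_def mutate_def by auto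

lemma mutate_path3:
  assumes "F y x = 0" "F z y = 0" "F z x = 0" and "distinct [x, y, z]"
  shows "cycle3 (mutate y F) x z y (F x y * F y z + F x z) (F y z) (F x y)"
  using assms unfolding cycle3_def mutate_def by auto

lemma twice_min_less_product:
  fixes a b c :: nat
  assumes "2 \<le> c" "c \<le> a" "c \<le> b" "6 < a + b + c"
  shows "2 * c < a * b"
proof (cases "a = 2")
  case True
  then show ?thesis using assms by auto
next
  case False
  then have "3 * b \<le> a * b" using assms by simp
  then show ?thesis using assms by linarith
qed

locale bounded_mutation_class =
  fixes V :: "'a set" and E :: "'a \<Rightarrow> 'a \<Rightarrow> nat" and B :: nat
  assumes bounded: "mut_reach V E F \<Longrightarrow> u \<in> V \<Longrightarrow> v \<in> V \<Longrightarrow> F u v \<le> B"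
begin

lemma cycle3_weight_sum_le_6:
  assumes "mut_reach V E F" "{x, y, z} \<subseteq> V" "distinct [x, y, z]" "cycle3 F x y z a b c"
    and "2 \<le> a" "2 \<le> b" "2 \<le> c"
  shows "a + b + c \<le> 6"
  using assms
proof (induction "3 * B - (a + b + c)" arbitrary: F x y z a b c rule: less_induct)
  case less
  show ?case
  proof (rule ccontr)
    assume "\<not> a + b + c \<le> 6"
    obtain x' y' z' a' b' c' where C: "cycle3 F x' y' z' a' b' c'" "{x', y', z'} = {x, y, z}"
      "distinct [x', y', z']" and w: "(a', b', c') \<in> {(a, b, c), (b, c, a), (c, a, b)}"
      "c' \<le> a'" "c' \<le> b'"
      using cycle3_rotate_min[OF less.prems(4,3)] by blast
    have sum: "a' + b' + c' = a + b + c" "2 \<le> a'" "2 \<le> b'" "2 \<le> c'"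
      using w(1) less.prems(5-7) by auto
    have grow: "2 * c' < a' * b'"
      using twice_min_less_product sum w \<open>\<not> a + b + c \<le> 6\<close> by simp
    have in_V: "x' \<in> V" "y' \<in> V" "z' \<in> V"
      using less.prems(2) C(2) by auto
    have R': "mut_reach V E (mutate y' F)"
      using less.prems(1) in_V by (intro mut_reach.step)
    have C': "cycle3 (mutate y' F) x' z' y' (a' * b' - c') b' a'"
      using mutate_cycle3[OF C(1,3)] grow by simp
    have "a' * b' - c' \<le> B" "b' \<le> B" "a' \<le> B"
      using bounded[OF R'] C' in_V unfolding cycle3_def by metis+
    then have "3 * B - ((a' * b' - c') + b' + a') < 3 * B - (a + b + c)"
      using grow sum by linarith
    from less.hyps[OF this R' _ _ C'] have "(a' * b' - c') + b' + a' \<le> 6"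
      using in_V C(3) sum grow by auto
    then show False
      using grow sum \<open>\<not> a + b + c \<le> 6\<close> by linarith
  qed
qed

lemma no_cycle3_single_light_arrow:
  assumes "mut_reach V E F" "{x, y, z} \<subseteq> V" "distinct [x, y, z]" "cycle3 F x y z a b 1"
    and "2 \<le> a" "2 \<le> b"
  shows False
proof -
  have "4 \<le> a * b"
    using mult_le_mono[OF assms(5,6)] by simp
  moreover have "cycle3 (mutate y F) x z y (a * b - 1) b a"
    using assms(5,6) by (intro mutate_cycle3[OF assms(4,3)]) simp
  moreover have "mut_reach V E (mutate y F)"
    using assms(1,2) by (intro mut_reach.step) auto
  ultimately have "(a * b - 1) + b + a \<le> 6"
    using assms(2,3,5,6) by (intro cycle3_weight_sum_le_6) auto
  then show False
    using \<open>4 \<le> a * b\<close> assms(5,6) by linarith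
qed

lemma no_cycle3_two_light_arrows:
  assumes "mut_reach V E F" "{x, y, z} \<subseteq> V" "distinct [x, y, z]" "cycle3 F x y z 1 b 1"
    and "3 \<le> b"
  shows False
proof -
  have "cycle3 (mutate z F) y x z (b * 1 - 1) 1 b"
    using assms(3,5) by (intro mutate_cycle3[OF cycle3_rotate[OF assms(4)]]) auto
  then have "cycle3 (mutate z F) z y x b (b - 1) 1"
    using cycle3_rotate[OF cycle3_rotate] by simp
  moreover have "mut_reach V E (mutate z F)"
    using assms(1,2) by (intro mut_reach.step) auto
  ultimately show False
    using no_cycle3_single_light_arrow[of "mutate z F" z y x b "b - 1"] assms(2,3,5) by fastforce
qed

lemma cycle3_weights:
  assumes "mut_reach V E F" "{x, y, z} \<subseteq> V" "distinct [x, y, z]" "cycle3 F x y z a b c"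
    and "1 \<le> a" "1 \<le> b" "1 \<le> c"
  shows "(a, b, c) \<in> {(1, 1, 1), (1, 1, 2), (1, 2, 1), (2, 1, 1), (2, 2, 2)}"
proof -
  have rotated: "{y, z, x} \<subseteq> V" "distinct [y, z, x]" "cycle3 F y z x b c a"
    "{z, x, y} \<subseteq> V" "distinct [z, x, y]" "cycle3 F z x y c a b"
    using assms(2,3) cycle3_rotate[OF assms(4)] cycle3_rotate[OF cycle3_rotate[OF assms(4)]]
    by auto
  note single = no_cycle3_single_light_arrow[OF assms(1)] and two = no_cycle3_two_light_arrows[OF assms(1)]
  have "\<not> (2 \<le> a \<and> 2 \<le> b \<and> c = 1)" "\<not> (2 \<le> b \<and> 2 \<le> c \<and> a = 1)"
    "\<not> (2 \<le> c \<and> 2 \<le> a \<and> b = 1)"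
    using single[OF assms(2,3), of a b] single[OF rotated(1,2), of b c] single[OF rotated(4,5), of c a]
      assms(4) rotated(3,6) by auto
  moreover have "\<not> (a = 1 \<and> c = 1 \<and> 3 \<le> b)" "\<not> (b = 1 \<and> a = 1 \<and> 3 \<le> c)"
    "\<not> (c = 1 \<and> b = 1 \<and> 3 \<le> a)"
    using two[OF assms(2,3), of b] two[OF rotated(1,2), of c] two[OF rotated(4,5), of a]
      assms(4) rotated(3,6) by auto
  moreover have "2 \<le> a \<and> 2 \<le> b \<and> 2 \<le> c \<longrightarrow> a + b + c \<le> 6"
    using cycle3_weight_sum_le_6[OF assms(1-4)] by blast
  ultimately show ?thesis
    using assms(5-7) by (cases "a = 1"; cases "b = 1"; cases "c = 1"; simp; linarith)
qed

lemma path3_weights: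
  assumes "mut_reach V E F" "{x, y, z} \<subseteq> V" "distinct [x, y, z]"
    and "1 \<le> F x y" "1 \<le> F y z" "F y x = 0" "F z y = 0" "F z x = 0"
  shows "F x y = 1 \<and> F y z = 1 \<and> F x z \<le> 1"
proof -
  have "mut_reach V E (mutate y F)"
    using assms(1,2) by (intro mut_reach.step) auto
  then have "(F x y * F y z + F x z, F y z, F x y)
      \<in> {(1, 1, 1), (1, 1, 2), (1, 2, 1), (2, 1, 1), (2, 2, 2)}"
  proof (rule cycle3_weights[OF _ _ _ mutate_path3[OF assms(6-8,3)]])
    have "1 * 1 \<le> F x y * F y z"
      by (rule mult_le_mono[OF assms(4,5)])
    then show "1 \<le> F x y * F y z + F x z"
      by linarith
  qed (use assms(2-5) in auto)
  then show ?thesis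
    by auto
qed

lemma source3_weights:
  assumes "mut_reach V E F" "{x, y, z} \<subseteq> V" "distinct [x, y, z]"
    and "1 \<le> F y x" "1 \<le> F y z" "F x y = 0" "F z y = 0" "F z x = 0" "F x z = 0"
  shows "F y x = 1 \<and> F y z = 1"
proof -
  have "mutate x F x y = F y x" "mutate x F y z = F y z" "mutate x F y x = 0"
    "mutate x F z y = 0" "mutate x F z x = 0" "mutate x F x z = 0"
    using assms(3,6-9) unfolding mutate_def by auto
  moreover have "mut_reach V E (mutate x F)"
    using assms(1,2) by (intro mut_reach.step) auto
  ultimately show ?thesis
    using path3_weights[of "mutate x F" x y z] assms(2-5) by simp
qed

lemma sink3_weights:
  assumes "mut_reach V E F" "{x, y, z} \<subseteq> V" "distinct [x, y, z]"
    and "1 \<le> F x y" "1 \<le> F z y" "F y x = 0" "F y z = 0" "F z x = 0" "F x z = 0"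
  shows "F x y = 1 \<and> F z y = 1"
proof -
  have "mutate x F z y = F z y" "mutate x F y x = F x y" "mutate x F y z = 0"
    "mutate x F x y = 0" "mutate x F x z = 0" "mutate x F z x = 0"
    using assms(3,6-9) unfolding mutate_def by auto
  moreover have "mut_reach V E (mutate x F)"
    using assms(1,2) by (intro mut_reach.step) auto
  ultimately show ?thesis
    using path3_weights[of "mutate x F" z y x] assms(2-5) by auto
qed

end

definition adjacent :: "('a \<Rightarrow> 'a \<Rightarrow> nat) \<Rightarrow> 'a \<Rightarrow> 'a \<Rightarrow> bool" where
  "adjacent F u v \<longleftrightarrow> 0 < F u v \<or> 0 < F v u"

lemma connected_on_has_neighbour:
  assumes "connected_on W F" "u \<in> W" "v \<in> W" "u \<noteq> v"
  shows "\<exists>w\<in>W. adjacent F u w"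
proof -
  have "(u, v) \<in> {(u, v). u \<in> W \<and> v \<in> W \<and> (0 < F u v \<or> 0 < F v u)}\<^sup>*"
    using assms(1-3) unfolding connected_on_def by blast
  then show ?thesis
    using assms(4) unfolding adjacent_def by (cases rule: converse_rtranclE) auto
qed

lemma connected_on_exit:
  assumes "connected_on V F" "W \<subseteq> V" "u \<in> W" "v \<in> V - W"
  shows "\<exists>w\<in>W. \<exists>d\<in>V - W. adjacent F w d"
proof -
  have "(u, v) \<in> {(u, v). u \<in> V \<and> v \<in> V \<and> (0 < F u v \<or> 0 < F v u)}\<^sup>*"
    using assms unfolding connected_on_def by blast
  then show ?thesis
    using assms(3,4)
  proof (induction rule: rtrancl_induct)
    case (step w d)
    then show ?case
      unfolding adjacent_def by (cases "w \<in> W") auto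
  qed simp
qed

lemma triangle_cases:
  fixes F :: "'a \<Rightarrow> 'a \<Rightarrow> nat"
  assumes no_2_cycles: "\<And>u v. F u v = 0 \<or> F v u = 0" and "distinct [x, y, z]"
  obtains (cycle) "0 < F x y" "0 < F y z" "0 < F z x"
    | (reverse_cycle) "0 < F x z" "0 < F z y" "0 < F y x"
    | (acyclic) p q r where "{p, q, r} = {x, y, z}" "distinct [p, q, r]"
      "F q p = 0" "F r q = 0" "F r p = 0"
proof -
  have "{x, z, y} = {x, y, z}" "{y, x, z} = {x, y, z}" "{y, z, x} = {x, y, z}"
    "{z, x, y} = {x, y, z}" "{z, y, x} = {x, y, z}"
    by auto
  moreover have "distinct [x, z, y]" "distinct [y, x, z]" "distinct [y, z, x]"
    "distinct [z, x, y]" "distinct [z, y, x]"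
    using assms(2) by auto
  ultimately show thesis
    using that(1,2) that(3)[of x y z] that(3)[of x z y] that(3)[of y x z] that(3)[of y z x]
      that(3)[of z x y] that(3)[of z y x] no_2_cycles[of x y] no_2_cycles[of y z]
      no_2_cycles[of x z] assms(2)
    by (metis neq0_conv)
qed

lemma type_A3_or_A2hatI:
  assumes "G \<in> {A3_a, A3_b, A3_c, A3_d, A2hat_e, A2hat_f}" "distinct [x, y, z]"
    "E x x = 0" "E y y = 0" "E z z = 0"
    "E x y = G 1 2" "E y x = G 2 1" "E y z = G 2 3" "E z y = G 3 2" "E x z = G 1 3" "E z x = G 3 1"
  shows "type_A3_or_A2hat {x, y, z} E"
proof -
  have "G 1 1 = 0" "G 2 2 = 0" "G 3 3 = 0"
    using assms(1) by (auto simp: A3_a_def A3_b_def A3_c_def A3_d_def A2hat_e_def A2hat_f_def)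
  then have "graph_iso {x, y, z} E {1, 2, 3} G"
    unfolding graph_iso_def bij_betw_def inj_on_def using assms(2-11)
    by (intro exI[of _ "\<lambda>u. if u = x then 1 else if u = y then 2 else 3"]) auto
  then show ?thesis
    using assms(1) unfolding type_A3_or_A2hat_def by blast
qed

locale bounded_mutation_quiver = bounded_mutation_class +
  assumes quiver: "quiver V E"
begin

lemma no_loops: "E u u = 0"
  using quiver unfolding quiver_def by blast

lemma no_2_cycles: "E u v = 0 \<or> E v u = 0"
  using quiver unfolding quiver_def by blast

lemmas quiver_triangle_cases =
  triangle_cases[where F = E, OF no_2_cycles, consumes 1, case_names cycle reverse_cycle acyclic]

lemma acyclic_triangle_weights:
  assumes "{p, q, r} \<subseteq> V" "distinct [p, q, r]" "E q p = 0" "E r q = 0" "E r p = 0"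
    and "\<forall>u\<in>{p, q, r}. \<exists>w\<in>{p, q, r}. adjacent E u w"
  shows "E p q = 1 \<and> E q r = 1 \<and> E p r \<le> 1
    \<or> E p q = 0 \<and> E q r = 1 \<and> E p r = 1
    \<or> E q r = 0 \<and> E p q = 1 \<and> E p r = 1"
proof -
  have adj: "0 < E p q \<or> 0 < E p r" "0 < E p q \<or> 0 < E q r" "0 < E p r \<or> 0 < E q r"
    using assms(3-6) no_loops unfolding adjacent_def by auto
  note R = mut_reach.refl[of V E]
  consider "0 < E p q" "0 < E q r" | "E p q = 0" | "E q r = 0"
    by blast
  then show ?thesis
  proof cases
    case 1
    then show ?thesis
      using path3_weights[OF R assms(1,2)] assms(3-5) by simp
  next
    case 2
    then have "E p r = 1 \<and> E q r = 1"
      using sink3_weights[OF R, of p r q] assms(1-5) adj by auto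
    then show ?thesis
      using 2 by simp
  next
    case 3
    then have "E p q = 1 \<and> E p r = 1"
      using source3_weights[OF R, of q p r] assms(1-5) adj by auto
    then show ?thesis
      using 3 by simp
  qed
qed

lemma acyclic_triangle_type:
  assumes "{p, q, r} \<subseteq> V" "distinct [p, q, r]" "E q p = 0" "E r q = 0" "E r p = 0"
    and "\<forall>u\<in>{p, q, r}. \<exists>w\<in>{p, q, r}. adjacent E u w"
  shows "type_A3_or_A2hat {p, q, r} E"
proof -
  note typeI = type_A3_or_A2hatI[where E = E, OF _ _ no_loops no_loops no_loops]
  have perms: "distinct [p, r, q]" "{p, r, q} = {p, q, r}" "distinct [q, p, r]" "{q, p, r} = {p, q, r}"
    using assms(2) by auto
  consider "E p q = 1" "E q r = 1" "E p r = 0" | "E p q = 1" "E q r = 1" "E p r = 1"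
    | "E p q = 0" "E q r = 1" "E p r = 1" | "E q r = 0" "E p q = 1" "E p r = 1"
    using acyclic_triangle_weights[OF assms] by linarith
  then show ?thesis
  proof cases
    case 1
    then show ?thesis
      using assms(2-5) by (intro typeI[of A3_a]) (auto simp: A3_a_def)
  next
    case 2
    then show ?thesis
      using assms(2-5) by (intro typeI[of A2hat_e]) (auto simp: A2hat_e_def)
  next
    case 3
    then have "type_A3_or_A2hat {p, r, q} E"
      using assms(3-5) perms(1) by (intro typeI[of A3_c]) (auto simp: A3_c_def)
    then show ?thesis
      using perms(2) by simp
  next
    case 4
    then have "type_A3_or_A2hat {q, p, r} E"
      using assms(3-5) perms(3) by (intro typeI[of A3_b]) (auto simp: A3_b_def)
    then show ?thesis
      using perms(4) by simp
  qed
qed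

lemma acyclic_triangle_simple:
  assumes "{p, q, r} \<subseteq> V" "distinct [p, q, r]" "E q p = 0" "E r q = 0" "E r p = 0"
    and "\<forall>u\<in>{p, q, r}. \<exists>w\<in>{p, q, r}. adjacent E u w"
    and "u \<in> {p, q, r}" "v \<in> {p, q, r}"
  shows "E u v \<le> 1"
  using acyclic_triangle_weights[OF assms(1-6)] assms(3-5,7,8) no_loops by auto

lemma cycle_triangle_type_or_markov:
  assumes "{p, q, r} \<subseteq> V" "distinct [p, q, r]" "0 < E p q" "0 < E q r" "0 < E r p"
  shows "type_A3_or_A2hat {p, q, r} E \<or> cycle3 E p q r 2 2 2"
proof -
  note typeI = type_A3_or_A2hatI[where E = E, OF _ _ no_loops no_loops no_loops]
  have reverse_zero: "E q p = 0" "E r q = 0" "E p r = 0"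
    using assms(3-5) no_2_cycles[of p q] no_2_cycles[of q r] no_2_cycles[of r p] by simp_all
  have "(E p q, E q r, E r p) \<in> {(1, 1, 1), (1, 1, 2), (1, 2, 1), (2, 1, 1), (2, 2, 2)}"
    using assms reverse_zero by (intro cycle3_weights[OF mut_reach.refl, of p q r]) (auto simp: cycle3_def)
  moreover have "distinct [r, p, q]" "{r, p, q} = {p, q, r}" "distinct [q, r, p]" "{q, r, p} = {p, q, r}"
    using assms(2) by auto
  ultimately show ?thesis
  proof (elim insertE emptyE)
    assume "(E p q, E q r, E r p) = (1, 1, 1)"
    then show ?thesis
      using assms(2) reverse_zero by (intro disjI1 typeI[of A3_d]) (auto simp: A3_d_def)
  next
    assume "(E p q, E q r, E r p) = (1, 1, 2)"
    then show ?thesis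
      using assms(2) reverse_zero by (intro disjI1 typeI[of A2hat_f]) (auto simp: A2hat_f_def)
  next
    assume "(E p q, E q r, E r p) = (1, 2, 1)" and "distinct [r, p, q]" "{r, p, q} = {p, q, r}"
    then show ?thesis
      using typeI[of A2hat_f r p q] reverse_zero by (auto simp: A2hat_f_def)
  next
    assume "(E p q, E q r, E r p) = (2, 1, 1)" and "distinct [q, r, p]" "{q, r, p} = {p, q, r}"
    then show ?thesis
      using typeI[of A2hat_f q r p] reverse_zero by (auto simp: A2hat_f_def)
  next
    assume "(E p q, E q r, E r p) = (2, 2, 2)"
    then show ?thesis
      using reverse_zero by (simp add: cycle3_def)
  qed
qed

lemma double_arrow_closes_triangle:
  assumes "{x, y, d} \<subseteq> V" "distinct [x, y, d]" "E x y = 2" "adjacent E d x \<or> adjacent E d y"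
  shows "0 < E y d \<and> 0 < E d x"
  using assms(2)
proof (cases rule: quiver_triangle_cases)
  case reverse_cycle
  then show ?thesis
    using assms(3) no_2_cycles[of x y] by simp
next
  case (acyclic p q r)
  have "\<forall>u\<in>{p, q, r}. \<exists>w\<in>{p, q, r}. adjacent E u w"
    using acyclic(1) assms(3,4) unfolding adjacent_def by auto
  then have "E x y \<le> 1"
    using acyclic assms(1) by (intro acyclic_triangle_simple[of p q r]) auto
  then show ?thesis
    using assms(3) by simp
qed simp

lemma markov_triangle_not_adjacent:
  assumes "cycle3 E p q r 2 2 2" "{p, q, r} \<subseteq> V" "distinct [p, q, r]" "d \<in> V - {p, q, r}"
  shows "\<not> adjacent E p d"
proof
  assume "adjacent E p d"
  then have "0 < E q d \<and> 0 < E d p"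
    using assms unfolding cycle3_def
    by (intro double_arrow_closes_triangle) (auto simp: adjacent_def)
  then have "0 < E r d \<and> 0 < E d q"
    using assms unfolding cycle3_def
    by (intro double_arrow_closes_triangle) (auto simp: adjacent_def)
  with \<open>0 < E q d \<and> 0 < E d p\<close> show False
    using no_2_cycles[of q d] by simp
qed

lemma cycle_triangle_type:
  assumes "{p, q, r} \<subseteq> V" "distinct [p, q, r]" "0 < E p q" "0 < E q r" "0 < E r p"
    and "d \<in> V - {p, q, r}" "u \<in> {p, q, r}" "adjacent E u d"
  shows "type_A3_or_A2hat {p, q, r} E"
proof (rule ccontr)
  assume "\<not> type_A3_or_A2hat {p, q, r} E"
  then have markov: "cycle3 E p q r 2 2 2"
    using cycle_triangle_type_or_markov[OF assms(1-5)] by blast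
  have "{q, r, p} = {p, q, r}" "{r, p, q} = {p, q, r}"
    by auto
  then show False
    using markov_triangle_not_adjacent[OF markov] markov_triangle_not_adjacent[OF cycle3_rotate[OF markov]]
      markov_triangle_not_adjacent[OF cycle3_rotate[OF cycle3_rotate[OF markov]]] assms(1,2,6-8)
    by auto
qed

lemma connected_triangle_type:
  assumes "{x, y, z} \<subseteq> V" "distinct [x, y, z]" "connected_on {x, y, z} E"
    and "d \<in> V - {x, y, z}" "u \<in> {x, y, z}" "adjacent E u d"
  shows "type_A3_or_A2hat {x, y, z} E"
  using assms(2)
proof (cases rule: quiver_triangle_cases)
  case cycle
  then show ?thesis
    using cycle_triangle_type[OF assms(1,2)] assms(4-6) by blast
next
  case reverse_cycle
  have "{x, z, y} = {x, y, z}"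
    by auto
  then show ?thesis
    using cycle_triangle_type[of x z y] reverse_cycle assms(1,2,4-6) by auto
next
  case (acyclic p q r)
  have "\<forall>v\<in>{x, y, z}. \<exists>w\<in>{x, y, z}. adjacent E v w"
    using connected_on_has_neighbour[OF assms(3)] assms(2) by (metis distinct_length_2_or_more insertCI)
  then show ?thesis
    using acyclic_triangle_type[of p q r] acyclic assms(1) by auto
qed

end

theorem corollary8:
  fixes V :: "'a set" and E :: "'a \<Rightarrow> 'a \<Rightarrow> nat"
  assumes "quiver V E"
    and "connected_on V E"
    and "mutation_finite V E"
    and "card V \<ge> 4"
  shows "\<forall>W. W \<subseteq> V \<and> card W = 3 \<and> connected_on W E \<longrightarrow> type_A3_or_A2hat W E"
proof (intro allI impI, elim conjE)
  fix W assume "W \<subseteq> V" "card W = 3" "connected_on W E"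
  have "finite V"
    using assms(1) unfolding quiver_def by blast
  then obtain B where "\<forall>F. mut_reach V E F \<longrightarrow> (\<forall>u\<in>V. \<forall>v\<in>V. F u v \<le> B)"
    using mutation_finite_imp_bounded assms(3) by blast
  then interpret bounded_mutation_quiver V E B
    using assms(1) by unfold_locales blast+
  obtain x y z where W: "W = {x, y, z}" "distinct [x, y, z]"
    using \<open>card W = 3\<close> unfolding card_3_iff by auto
  have "W \<noteq> V"
    using \<open>card W = 3\<close> assms(4) by auto
  then obtain v where "v \<in> V - W"
    using \<open>W \<subseteq> V\<close> by blast
  then obtain u d where "u \<in> W" "d \<in> V - W" "adjacent E u d"
    using connected_on_exit[OF assms(2) \<open>W \<subseteq> V\<close>, of x v] W(1) by blast
  then show "type_A3_or_A2hat W E"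
    using connected_triangle_type[of x y z d u] \<open>W \<subseteq> V\<close> \<open>connected_on W E\<close> W by simp
qed

end
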